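(* Let $M$ be a smooth manifold and $g_1,g_2$ Riemannian metrics on $M$. For $p\in M$ write $\|\cdot\|_i^{(p)}$ for the norm on $T_pM$ induced by $(g_i)_p$. The following are equivalent: (1) $g_1$ and $g_2$ are roughly conformal, i.e. there is a function (not necessarily continuous) $h:M\to(0,\infty)$ with $(g_2)_p=h(p)(g_1)_p$ for every $p\in M$; (2) there is a function (not necessarily continuous) $f:M\to(0,\infty)$ such that $\|\cdot\|_1^{(p)}=f(p)\|\cdot\|_2^{(p)}$ on $T_pM$ for each $p\in M$; (3) for each $p\in M$, $(g_1)_p$ and $(g_2)_p$ give the same angle between every pair of nonzero vectors in $T_pM$; (4) for each $p\in M$ and all nonzero $v,w\in T_pM$, $(g_1)_p(v,w)=0\iff(g_2)_p(v,w)=0$; (5) for each $p\in M$ there is $\theta_0\in(0,\pi)$ such that for all nonzero $v,w\in T_pM$, the angle between $v,w$ with respect to $(g_1)_p$ is $\theta_0$ iff the angle between them with respect to $(g_2)_p$ is $\theta_0$.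
   Context: For an inner product $g$ on a real vector space, the angle between nonzero vectors $v,w$ is the unique $\theta\in[0,\pi]$ with $\cos\theta=g(v,w)/(\sqrt{g(v,v)}\sqrt{g(w,w)})$. *)

theory Defs
  imports "HOL-Analysis.Analysis"
begin

definition inner_product_on :: "('v::real_vector \<Rightarrow> 'v \<Rightarrow> real) \<Rightarrow> bool" where
  "inner_product_on g \<longleftrightarrow>
     (\<forall>v. linear (g v)) \<and> (\<forall>v w. g v w = g w v) \<and> (\<forall>v. v \<noteq> 0 \<longrightarrow> g v v > 0)"

definition ip_norm :: "('v \<Rightarrow> 'v \<Rightarrow> real) \<Rightarrow> 'v \<Rightarrow> real" where
  "ip_norm g v = sqrt (g v v)"

definition ip_angle :: "('v \<Rightarrow> 'v \<Rightarrow> real) \<Rightarrow> 'v \<Rightarrow> 'v \<Rightarrow> real" where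
  "ip_angle g v w = arccos (g v w / (sqrt (g v v) * sqrt (g w w)))"

text \<open>A (pointwise) Riemannian metric on a manifold whose points form the type 'm and whose
  tangent spaces T_pM are identified with the finite-dimensional space 'v.\<close>
definition pointwise_metric :: "('m \<Rightarrow> 'v::real_vector \<Rightarrow> 'v \<Rightarrow> real) \<Rightarrow> bool" where
  "pointwise_metric g \<longleftrightarrow> (\<forall>p. inner_product_on (g p))"

end

theory Submission
  imports Defs
begin

text \<open>Everything happens in a single tangent space. Rescaling an inner product changes neither
  angles nor, up to a constant factor, norms; conversely polarization recovers an inner product
  from its quadratic form, so conformality reduces to proportionality of the two quadratic forms.
  If \<open>g\<^sub>1\<close>-orthogonality implies \<open>g\<^sub>2\<close>-orthogonality, then for \<open>g\<^sub>1\<close>-unit vectors \<open>u, v\<close> the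
  orthogonal pair \<open>u + v, u - v\<close> forces \<open>g\<^sub>2(u,u) = g\<^sub>2(v,v)\<close>, i.e. the forms are proportional.
  Finally, if a single angle \<open>\<theta> \<in> (0,\<pi>)\<close> is preserved and \<open>u, w\<close> are \<open>g\<^sub>1\<close>-orthonormal, both vectors
  \<open>cos \<theta> u \<plusminus> sin \<theta> w\<close> make \<open>g\<^sub>1\<close>-angle \<open>\<theta>\<close> with \<open>u\<close>; writing out that they make \<open>g\<^sub>2\<close>-angle \<open>\<theta>\<close>
  and subtracting the two equations gives \<open>g\<^sub>2(u,w) = 0\<close>.\<close>

context
  fixes g :: "'v::real_vector \<Rightarrow> 'v \<Rightarrow> real"
  assumes ip: "inner_product_on g"
begin

lemma ip_linear_right: "linear (g v)"
  using ip unfolding inner_product_on_def by blast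

lemma ip_sym: "g v w = g w v"
  using ip unfolding inner_product_on_def by blast

lemma ip_self_pos: "v \<noteq> 0 \<Longrightarrow> g v v > 0"
  using ip unfolding inner_product_on_def by blast

lemma ip_add_right: "g v (w1 + w2) = g v w1 + g v w2"
  using linear_add[OF ip_linear_right] by simp

lemma ip_diff_right: "g v (w1 - w2) = g v w1 - g v w2"
  using linear_diff[OF ip_linear_right] by simp

lemma ip_scaleR_right: "g v (a *\<^sub>R w) = a * g v w"
  using linear_cmul[OF ip_linear_right] by simp

lemma ip_zero_right: "g v 0 = 0"
  using linear_0[OF ip_linear_right] by simp

lemma ip_minus_right: "g v (- w) = - g v w"
  using ip_diff_right[of v 0 w] ip_zero_right by simp

lemma ip_add_left: "g (w1 + w2) v = g w1 v + g w2 v"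
  using ip_add_right ip_sym by metis

lemma ip_diff_left: "g (w1 - w2) v = g w1 v - g w2 v"
  using ip_diff_right ip_sym by metis

lemma ip_scaleR_left: "g (a *\<^sub>R w) v = a * g w v"
  using ip_scaleR_right ip_sym by metis

lemma ip_zero_left: "g 0 v = 0"
  using ip_zero_right ip_sym by metis

lemma ip_minus_left: "g (- w) v = - g w v"
  using ip_minus_right ip_sym by metis

lemmas ip_simps = ip_add_right ip_diff_right ip_scaleR_right ip_zero_right
  ip_add_left ip_diff_left ip_scaleR_left ip_zero_left

lemma ip_self_nonneg: "g v v \<ge> 0"
  using ip_self_pos[of v] ip_zero_left by (cases "v = 0") auto

lemma ip_polarization: "g v w = (g (v + w) (v + w) - g v v - g w w) / 2"
  by (simp add: ip_simps ip_sym[of w v])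

lemma ip_Cauchy_Schwarz: "(g v w)\<^sup>2 \<le> g v v * g w w"
proof (cases "w = 0")
  case True
  then show ?thesis by (simp add: ip_zero_right)
next
  case False
  hence pw: "g w w > 0" by (rule ip_self_pos)
  define t where "t = g v w / g w w"
  have "0 \<le> g (v - t *\<^sub>R w) (v - t *\<^sub>R w)" by (rule ip_self_nonneg)
  also have "\<dots> = g v v - 2 * t * g v w + t\<^sup>2 * g w w"
    by (simp add: ip_simps ip_sym[of w v] power2_eq_square algebra_simps)
  also have "\<dots> = g v v - (g v w)\<^sup>2 / g w w"
    using pw by (simp add: t_def power2_eq_square field_simps)
  finally show ?thesis using pw by (simp add: field_simps)
qed

lemma ip_cos_angle_bounded: "\<bar>g v w / (sqrt (g v v) * sqrt (g w w))\<bar> \<le> 1"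
proof -
  have abs_div_le_1: "\<bar>x / y\<bar> \<le> 1" if "\<bar>x\<bar> \<le> y" for x y :: real
  proof (cases "y = 0")
    case False
    with that have "y > 0" by linarith
    with that show ?thesis by (simp add: abs_divide)
  qed simp
  have "\<bar>g v w\<bar> = sqrt ((g v w)\<^sup>2)" by simp
  also have "\<dots> \<le> sqrt (g v v * g w w)"
    using ip_Cauchy_Schwarz real_sqrt_le_mono by blast
  finally have "\<bar>g v w\<bar> \<le> sqrt (g v v) * sqrt (g w w)"
    by (simp add: real_sqrt_mult)
  then show ?thesis by (rule abs_div_le_1)
qed

lemma ip_angle_eq_iff_cos:
  assumes "0 \<le> \<theta>" "\<theta> \<le> pi"
  shows "ip_angle g v w = \<theta> \<longleftrightarrow> g v w / (sqrt (g v v) * sqrt (g w w)) = cos \<theta>"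
proof -
  let ?c = "g v w / (sqrt (g v v) * sqrt (g w w))"
  have "cos (arccos ?c) = ?c"
    using ip_cos_angle_bounded[of v w] unfolding abs_le_iff by (intro cos_arccos) linarith+
  then show ?thesis
    unfolding ip_angle_def using arccos_cos[OF assms] by metis
qed

lemma ip_angle_eq_pi_half_iff:
  assumes "v \<noteq> 0" "w \<noteq> 0"
  shows "ip_angle g v w = pi / 2 \<longleftrightarrow> g v w = 0"
  using ip_angle_eq_iff_cos[of "pi / 2" v w] ip_self_pos[OF assms(1)] ip_self_pos[OF assms(2)]
  by auto

lemma ip_scaleR_self: "g (a *\<^sub>R v) (a *\<^sub>R v) = a\<^sup>2 * g v v"
  by (simp add: ip_simps power2_eq_square)

lemma ip_normalize:
  assumes "v \<noteq> 0"
  shows "g ((1 / sqrt (g v v)) *\<^sub>R v) ((1 / sqrt (g v v)) *\<^sub>R v) = 1"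
  using ip_self_pos[OF assms] by (simp add: ip_scaleR_self power_divide)

end

lemma ip_angle_scale:
  assumes "h > 0"
  shows "ip_angle (\<lambda>v w. h * g v w) v w = ip_angle g v w"
proof -
  have "sqrt (h * g v v) * sqrt (h * g w w) = h * (sqrt (g v v) * sqrt (g w w))"
    using assms by (simp add: real_sqrt_mult real_sqrt_mult_self)
  then show ?thesis
    unfolding ip_angle_def using assms by simp
qed

lemma ip_eq_scale_if_self_eq_scale:
  assumes ip1: "inner_product_on g1" and ip2: "inner_product_on g2"
    and diag: "\<And>v. g2 v v = h * g1 v v"
  shows "g2 v w = h * g1 v w"
proof -
  have "g2 v w = (h * g1 (v + w) (v + w) - h * g1 v v - h * g1 w w) / 2"
    by (simp only: ip_polarization[OF ip2, of v w] diag)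
  also have "\<dots> = h * g1 v w"
    by (simp only: ip_polarization[OF ip1, of v w]) (simp add: algebra_simps)
  finally show ?thesis .
qed

lemma conformal_iff_norms_proportional:
  assumes ip1: "inner_product_on g1" and ip2: "inner_product_on g2"
  shows "(\<exists>h>0. \<forall>v w. g2 v w = h * g1 v w) \<longleftrightarrow> (\<exists>f>0. \<forall>v. ip_norm g1 v = f * ip_norm g2 v)"
proof
  assume "\<exists>h>0. \<forall>v w. g2 v w = h * g1 v w"
  then obtain h where h: "h > 0" "\<And>v w. g2 v w = h * g1 v w" by blast
  have "ip_norm g1 v = (1 / sqrt h) * ip_norm g2 v" for v
    using h by (simp add: ip_norm_def real_sqrt_mult)
  then show "\<exists>f>0. \<forall>v. ip_norm g1 v = f * ip_norm g2 v"
    using h(1) by (intro exI[of _ "1 / sqrt h"]) auto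
next
  assume "\<exists>f>0. \<forall>v. ip_norm g1 v = f * ip_norm g2 v"
  then obtain f where f: "f > 0" "\<And>v. sqrt (g1 v v) = f * sqrt (g2 v v)"
    unfolding ip_norm_def by blast
  have diag: "g2 v v = (1 / f\<^sup>2) * g1 v v" for v
  proof -
    have "(sqrt (g1 v v))\<^sup>2 = f\<^sup>2 * (sqrt (g2 v v))\<^sup>2"
      by (simp add: f(2) power_mult_distrib)
    then show ?thesis
      using f(1) ip_self_nonneg[OF ip1] ip_self_nonneg[OF ip2] by (simp add: field_simps)
  qed
  show "\<exists>h>0. \<forall>v w. g2 v w = h * g1 v w"
    using f(1) ip_eq_scale_if_self_eq_scale[OF ip1 ip2 diag] by (intro exI[of _ "1 / f\<^sup>2"]) simp
qed

lemma conformal_imp_angles_eq: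
  assumes "\<exists>h>0. \<forall>v w. g2 v w = h * g1 v w"
  shows "ip_angle g1 v w = ip_angle g2 v w"
proof -
  obtain h where "h > 0" "g2 = (\<lambda>v w. h * g1 v w)"
    using assms by (auto simp: fun_eq_iff)
  then show ?thesis using ip_angle_scale[of h g1 v w] by simp
qed

lemma angles_eq_imp_orthogonality_preserved:
  assumes ip1: "inner_product_on g1" and ip2: "inner_product_on g2"
    and "ip_angle g1 v w = ip_angle g2 v w" "v \<noteq> 0" "w \<noteq> 0"
  shows "g1 v w = 0 \<longleftrightarrow> g2 v w = 0"
  using ip_angle_eq_pi_half_iff[OF ip1] ip_angle_eq_pi_half_iff[OF ip2] assms(3-) by metis

lemma orthogonality_preserved_imp_unit_norms_eq:
  assumes ip1: "inner_product_on g1" and ip2: "inner_product_on g2"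
    and orth: "\<And>v w. v \<noteq> 0 \<Longrightarrow> w \<noteq> 0 \<Longrightarrow> g1 v w = 0 \<Longrightarrow> g2 v w = 0"
    and "g1 u u = 1" "g1 v v = 1"
  shows "g2 u u = g2 v v"
proof (cases "u + v = 0 \<or> u - v = 0")
  case True
  then consider "v = - u" | "v = u"
    by (metis add_eq_0_iff eq_iff_diff_eq_0)
  then show ?thesis
    by cases (simp_all add: ip_minus_left[OF ip2] ip_minus_right[OF ip2])
next
  case False
  have "g1 (u + v) (u - v) = 0"
    using assms(4,5) by (simp add: ip_simps[OF ip1] ip_sym[OF ip1, of v u])
  hence "g2 (u + v) (u - v) = 0" using orth False by blast
  then show ?thesis by (simp add: ip_simps[OF ip2] ip_sym[OF ip2, of v u])
qed

lemma orthogonality_preserved_imp_conformal: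
  assumes ip1: "inner_product_on g1" and ip2: "inner_product_on g2"
    and orth: "\<And>v w. v \<noteq> 0 \<Longrightarrow> w \<noteq> 0 \<Longrightarrow> g1 v w = 0 \<Longrightarrow> g2 v w = 0"
  shows "\<exists>h>0. \<forall>v w. g2 v w = h * g1 v w"
proof -
  define n where "n v = (1 / sqrt (g1 v v)) *\<^sub>R v" for v
  have ratio: "g2 v v / g1 v v = g2 (n v) (n v)" if "v \<noteq> 0" for v
    using ip_self_pos[OF ip1 that]
    by (simp add: n_def ip_scaleR_self[OF ip2] power_divide)
  have ratio_eq: "g2 v v / g1 v v = g2 u u / g1 u u" if "u \<noteq> 0" "v \<noteq> 0" for u v
    using orthogonality_preserved_imp_unit_norms_eq[OF ip1 ip2 orth]
      ip_normalize[OF ip1] ratio that unfolding n_def by metis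
  obtain h where "h > 0" and diag: "\<And>v. g2 v v = h * g1 v v"
  proof (cases "\<exists>e::'a. e \<noteq> 0")
    case True
    then obtain e :: 'a where e: "e \<noteq> 0" by blast
    show ?thesis
    proof
      show "g2 e e / g1 e e > 0"
        using ip_self_pos[OF ip1 e] ip_self_pos[OF ip2 e] by simp
      show "g2 v v = g2 e e / g1 e e * g1 v v" for v
        using ratio_eq[OF e, of v] ip_self_pos[OF ip1, of v]
        by (cases "v = 0") (simp_all add: ip_zero_left[OF ip1] ip_zero_left[OF ip2] field_simps)
    qed
  next
    case False
    show ?thesis
    proof (rule that[of 1])
      show "g2 v v = 1 * g1 v v" for v
        using False ip_zero_left[OF ip1, of 0] ip_zero_left[OF ip2, of 0] by (metis mult_1)
    qed simp
  qed
  then show ?thesis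
    using ip_eq_scale_if_self_eq_scale[OF ip1 ip2 diag] by blast
qed

lemma ip_angle_rotate:
  assumes ip: "inner_product_on g"
    and "g u u = 1" "g w w = 1" "g u w = 0" "0 \<le> \<theta>" "\<theta> \<le> pi" "\<sigma>\<^sup>2 = (sin \<theta>)\<^sup>2"
  shows "ip_angle g u (cos \<theta> *\<^sub>R u + \<sigma> *\<^sub>R w) = \<theta>"
proof -
  let ?x = "cos \<theta> *\<^sub>R u + \<sigma> *\<^sub>R w"
  have "g ?x ?x = (cos \<theta>)\<^sup>2 + \<sigma>\<^sup>2"
    using assms(2-4) by (simp add: ip_simps[OF ip] ip_sym[OF ip, of w u] power2_eq_square)
  also have "\<dots> = 1" using assms(7) by simp
  finally show ?thesis
    using assms(2,4) ip_angle_eq_iff_cos[OF ip assms(5,6)] by (simp add: ip_simps[OF ip])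
qed

lemma single_angle_preserved_imp_orthonormal_orthogonal:
  assumes ip1: "inner_product_on g1" and ip2: "inner_product_on g2"
    and \<theta>: "0 < \<theta>" "\<theta> < pi"
    and pres: "\<And>v w. v \<noteq> 0 \<Longrightarrow> w \<noteq> 0 \<Longrightarrow> ip_angle g1 v w = \<theta> \<Longrightarrow> ip_angle g2 v w = \<theta>"
    and on: "g1 u u = 1" "g1 w w = 1" "g1 u w = 0"
  shows "g2 u w = 0"
proof -
  define c s where "c = cos \<theta>" and "s = sin \<theta>"
  define \<alpha> \<beta> \<gamma> where "\<alpha> = g2 u u" and "\<beta> = g2 u w" and "\<gamma> = g2 w w"
  have u0: "u \<noteq> 0" using on(1) ip_zero_left[OF ip1] by auto
  have s0: "s > 0" unfolding s_def using \<theta> sin_gt_zero by blast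
  have cs: "c\<^sup>2 + s\<^sup>2 = 1" unfolding c_def s_def by simp
  have \<alpha>0: "\<alpha> > 0" unfolding \<alpha>_def using ip_self_pos[OF ip2 u0] .
  have expand: "(c * \<alpha> + \<sigma> * \<beta>)\<^sup>2 = c\<^sup>2 * \<alpha> * (c\<^sup>2 * \<alpha> + 2 * c * \<sigma> * \<beta> + \<sigma>\<^sup>2 * \<gamma>)"
    if "\<sigma>\<^sup>2 = s\<^sup>2" for \<sigma>
  proof -
    define x where "x = c *\<^sub>R u + \<sigma> *\<^sub>R w"
    have "ip_angle g1 u x = \<theta>"
      unfolding x_def c_def using ip_angle_rotate[OF ip1 on] \<theta> that s_def by simp
    moreover have "x \<noteq> 0"
    proof -
      have "g1 w x = \<sigma>" using on by (simp add: x_def ip_simps[OF ip1] ip_sym[OF ip1, of w u])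
      moreover have "\<sigma> \<noteq> 0" using that s0 by auto
      ultimately show ?thesis by (auto simp: ip_zero_right[OF ip1])
    qed
    ultimately have "ip_angle g2 u x = \<theta>" using pres u0 by blast
    hence "g2 u x = c * (sqrt \<alpha> * sqrt (g2 x x))"
      using ip_angle_eq_iff_cos[OF ip2, of \<theta> u x] \<theta> \<alpha>0 ip_self_pos[OF ip2 \<open>x \<noteq> 0\<close>]
      unfolding c_def \<alpha>_def by (simp add: field_simps)
    hence "(g2 u x)\<^sup>2 = c\<^sup>2 * \<alpha> * g2 x x"
      using \<alpha>0 ip_self_nonneg[OF ip2, of x] by (simp add: power_mult_distrib)
    moreover have "g2 u x = c * \<alpha> + \<sigma> * \<beta>"
      by (simp add: x_def ip_simps[OF ip2] \<alpha>_def \<beta>_def)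
    moreover have "g2 x x = c\<^sup>2 * \<alpha> + 2 * c * \<sigma> * \<beta> + \<sigma>\<^sup>2 * \<gamma>"
      by (simp add: x_def ip_simps[OF ip2] \<alpha>_def \<beta>_def \<gamma>_def ip_sym[OF ip2, of w u]
          power2_eq_square algebra_simps)
    ultimately show ?thesis by simp
  qed
  note plus = expand[of s] and minus = expand[of "- s"]
  have "4 * c * s * \<alpha> * \<beta> * (1 - c\<^sup>2) = 0"
    \<comment> \<open>the difference of the two expansions; if \<open>c = 0\<close> use \<open>plus\<close> directly\<close>
    using plus minus by algebra
  moreover have "1 - c\<^sup>2 = s\<^sup>2" using cs by simp
  moreover have "s\<^sup>2 * \<beta>\<^sup>2 = 0" if "c = 0"
    using plus that by (simp add: power2_eq_square)
  ultimately have "\<beta> = 0" using s0 \<alpha>0 by (cases "c = 0") auto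
  then show ?thesis unfolding \<beta>_def .
qed

lemma single_angle_preserved_imp_orthogonal:
  assumes ip1: "inner_product_on g1" and ip2: "inner_product_on g2"
    and \<theta>: "0 < \<theta>" "\<theta> < pi"
    and pres: "\<And>v w. v \<noteq> 0 \<Longrightarrow> w \<noteq> 0 \<Longrightarrow> ip_angle g1 v w = \<theta> \<Longrightarrow> ip_angle g2 v w = \<theta>"
    and "v \<noteq> 0" "w \<noteq> 0" "g1 v w = 0"
  shows "g2 v w = 0"
proof -
  define a b where "a = 1 / sqrt (g1 v v)" and "b = 1 / sqrt (g1 w w)"
  have "a > 0" "b > 0"
    using ip_self_pos[OF ip1] assms(6,7) by (simp_all add: a_def b_def)
  have unit: "g1 (a *\<^sub>R v) (a *\<^sub>R v) = 1" "g1 (b *\<^sub>R w) (b *\<^sub>R w) = 1"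
    unfolding a_def b_def using ip_normalize[OF ip1] assms(6,7) by blast+
  have "g1 (a *\<^sub>R v) (b *\<^sub>R w) = 0"
    using assms(8) by (simp add: ip_simps[OF ip1])
  then have "g2 (a *\<^sub>R v) (b *\<^sub>R w) = 0"
    using single_angle_preserved_imp_orthonormal_orthogonal[OF ip1 ip2 \<theta> pres unit] by blast
  then show ?thesis using \<open>a > 0\<close> \<open>b > 0\<close> by (simp add: ip_simps[OF ip2])
qed

lemma single_angle_preserved_imp_orthogonality_preserved:
  assumes ip1: "inner_product_on g1" and ip2: "inner_product_on g2"
    and "0 < \<theta>" "\<theta> < pi"
    and pres: "\<forall>v w. v \<noteq> 0 \<longrightarrow> w \<noteq> 0 \<longrightarrow> (ip_angle g1 v w = \<theta> \<longleftrightarrow> ip_angle g2 v w = \<theta>)"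
    and "v \<noteq> 0" "w \<noteq> 0"
  shows "g1 v w = 0 \<longleftrightarrow> g2 v w = 0"
  using single_angle_preserved_imp_orthogonal[OF ip1 ip2 assms(3,4) _ assms(6,7)]
    single_angle_preserved_imp_orthogonal[OF ip2 ip1 assms(3,4) _ assms(6,7)] pres by blast

theorem mainTheorem12:
  fixes g1 g2 :: "'m \<Rightarrow> 'v::euclidean_space \<Rightarrow> 'v \<Rightarrow> real"
  assumes "pointwise_metric g1" and "pointwise_metric g2"
  defines "C1 \<equiv> (\<exists>h::'m \<Rightarrow> real. (\<forall>p. h p > 0) \<and> (\<forall>p v w. g2 p v w = h p * g1 p v w))"
      and "C2 \<equiv> (\<exists>f::'m \<Rightarrow> real. (\<forall>p. f p > 0) \<and>
                   (\<forall>p v. ip_norm (g1 p) v = f p * ip_norm (g2 p) v))"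
      and "C3 \<equiv> (\<forall>p v w. v \<noteq> 0 \<longrightarrow> w \<noteq> 0 \<longrightarrow> ip_angle (g1 p) v w = ip_angle (g2 p) v w)"
      and "C4 \<equiv> (\<forall>p v w. v \<noteq> 0 \<longrightarrow> w \<noteq> 0 \<longrightarrow> (g1 p v w = 0 \<longleftrightarrow> g2 p v w = 0))"
      and "C5 \<equiv> (\<forall>p. \<exists>\<theta>0. 0 < \<theta>0 \<and> \<theta>0 < pi \<and>
                   (\<forall>v w. v \<noteq> 0 \<longrightarrow> w \<noteq> 0 \<longrightarrow>
                      (ip_angle (g1 p) v w = \<theta>0 \<longleftrightarrow> ip_angle (g2 p) v w = \<theta>0)))"
  shows "(C1 \<longleftrightarrow> C2) \<and> (C2 \<longleftrightarrow> C3) \<and> (C3 \<longleftrightarrow> C4) \<and> (C4 \<longleftrightarrow> C5)"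
proof -
  have ip1: "inner_product_on (g1 p)" and ip2: "inner_product_on (g2 p)" for p
    using assms(1,2) unfolding pointwise_metric_def by blast+
  have C1_pointwise: "C1 \<longleftrightarrow> (\<forall>p. \<exists>h>0. \<forall>v w. g2 p v w = h * g1 p v w)"
    unfolding C1_def by (simp add: choice_iff all_conj_distrib)
  have C2_pointwise: "C2 \<longleftrightarrow> (\<forall>p. \<exists>f>0. \<forall>v. ip_norm (g1 p) v = f * ip_norm (g2 p) v)"
    unfolding C2_def by (simp add: choice_iff all_conj_distrib)
  have "C1 \<longleftrightarrow> C2"
    unfolding C1_pointwise C2_pointwise using conformal_iff_norms_proportional[OF ip1 ip2] by blast
  moreover have "C3" if "C1"
    unfolding C3_def
  proof (intro allI impI)
    show "ip_angle (g1 p) v w = ip_angle (g2 p) v w" for p v w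
      using \<open>C1\<close> conformal_imp_angles_eq[of "g2 p" "g1 p"] unfolding C1_pointwise by blast
  qed
  moreover have "C3 \<Longrightarrow> C4"
    unfolding C3_def C4_def using angles_eq_imp_orthogonality_preserved[OF ip1 ip2] by blast
  moreover have "C4 \<Longrightarrow> C1"
    unfolding C1_pointwise C4_def using orthogonality_preserved_imp_conformal[OF ip1 ip2] by blast
  moreover have "C3 \<Longrightarrow> C5"
    unfolding C3_def C5_def by (intro allI exI[of _ "pi / 2"]) auto
  moreover have "C5 \<Longrightarrow> C4"
    unfolding C4_def C5_def
    using single_angle_preserved_imp_orthogonality_preserved[OF ip1 ip2] by blast
  ultimately show ?thesis by blast
qed

end
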